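(* Let $n\ge1$, let $y,z\in C(SU(n+1))$ be given by $y(A)=a_{n+1,1}$ and $z(A)=\overline{a_{n+1,n+1}}$, where $a_{ij}$ denotes the $(i,j)$-entry of $A\in SU(n+1)$, and for $\gamma=(\gamma_1,\gamma_2)\in\mathbb{N}^2$ (with $0\in\mathbb{N}$) let $b^{\gamma}=y^{\gamma_1}z^{\gamma_2}$. Let $\epsilon_1=(1,0)$, $\epsilon_2=(0,1)$ and let $\|\cdot\|$ be the supremum norm. Then (1) $\sup_{\{\gamma:\gamma_1=\gamma_2\}}\|b^\gamma\|/\|b^{\gamma+\epsilon_1+\epsilon_2}\|<\infty$; (2) $\sup_{\{\gamma:\gamma_1\ge\gamma_2\}}\|b^\gamma\|/\|b^{\gamma+\epsilon_1}\|<\infty$; (3) $\sup_{\{\gamma:\gamma_1\le\gamma_2\}}\|b^\gamma\|/\|b^{\gamma+\epsilon_2}\|<\infty$. *)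

theory Defs
  imports "HOL-Analysis.Analysis" "HOL-Combinatorics.Permutations"
begin

text \<open>Matrices of size N x N are represented as functions nat => nat => complex,
  with 0-based indices 0..N-1 and entries zero outside that range.
  The paper's entry a_{ij} (1-based) is A (i-1) (j-1).\<close>

definition mat_det :: "nat \<Rightarrow> (nat \<Rightarrow> nat \<Rightarrow> complex) \<Rightarrow> complex" where
  "mat_det N A = (\<Sum>p | p permutes {..<N}. of_int (sign p) * (\<Prod>i<N. A i (p i)))"

definition SU :: "nat \<Rightarrow> (nat \<Rightarrow> nat \<Rightarrow> complex) set" where
  "SU N = {A. (\<forall>i j. (i \<ge> N \<or> j \<ge> N) \<longrightarrow> A i j = 0)
             \<and> (\<forall>i<N. \<forall>j<N. (\<Sum>k<N. A i k * cnj (A j k)) = (if i = j then 1 else 0))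
             \<and> mat_det N A = 1}"

definition supnorm :: "nat \<Rightarrow> ((nat \<Rightarrow> nat \<Rightarrow> complex) \<Rightarrow> complex) \<Rightarrow> real" where
  "supnorm N f = (SUP A\<in>SU N. cmod (f A))"

definition yfun :: "nat \<Rightarrow> (nat \<Rightarrow> nat \<Rightarrow> complex) \<Rightarrow> complex" where
  "yfun n A = A n 0"

definition zfun :: "nat \<Rightarrow> (nat \<Rightarrow> nat \<Rightarrow> complex) \<Rightarrow> complex" where
  "zfun n A = cnj (A n n)"

definition bmon :: "nat \<Rightarrow> nat \<times> nat \<Rightarrow> (nat \<Rightarrow> nat \<Rightarrow> complex) \<Rightarrow> complex" where
  "bmon n \<gamma> A = yfun n A ^ fst \<gamma> * zfun n A ^ snd \<gamma>"

end

theory Submission imports Defs begin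

(* |y| and |z| are moduli of two entries of the last row of a unitary matrix, so the pair
   (|y|, |z|) ranges over the quarter disc u^2 + v^2 <= 1, and rotations in the plane of the
   first and last coordinates realise every point of the quarter circle. Hence the sup norm
   of y^a z^b is the maximum of s^a t^b over the quarter circle. On the circle the larger
   coordinate is at least 1/sqrt 2, so after putting the larger exponent on the larger
   coordinate, raising that exponent by one loses at most a factor 2; for a = b the point
   (1/sqrt 2, 1/sqrt 2) maximises s t. *)

definition quarter_circle :: "(real \<times> real) set" where
  "quarter_circle = {(s, t). 0 \<le> s \<and> 0 \<le> t \<and> s\<^sup>2 + t\<^sup>2 = 1}"

definition rot_mat :: "nat \<Rightarrow> real \<Rightarrow> real \<Rightarrow> nat \<Rightarrow> nat \<Rightarrow> complex" where
  "rot_mat n s t i j =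
    (if i = n \<and> j = 0 then of_real s else if i = n \<and> j = n then of_real t
     else if i = 0 \<and> j = 0 then of_real t else if i = 0 \<and> j = n then - of_real s
     else if i = j \<and> i < n then 1 else 0)"

lemma rot_mat_middle: "n \<ge> 1 \<Longrightarrow> k \<in> {1..<n} \<Longrightarrow> rot_mat n s t i k = (if i = k then 1 else 0)"
  by (auto simp: rot_mat_def)

lemma rot_mat_orthonormal:
  assumes n: "n \<ge> 1" and st: "s\<^sup>2 + t\<^sup>2 = 1" and i: "i < n+1" and j: "j < n+1"
  shows "(\<Sum>k<n+1. rot_mat n s t i k * cnj (rot_mat n s t j k)) = (if i = j then 1 else 0)"
proof -
  have split: "{..<n+1} = insert 0 (insert n {1..<n})" using n by auto
  have middle: "(\<Sum>k\<in>{1..<n}. rot_mat n s t i k * cnj (rot_mat n s t j k))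
      = (if i = j \<and> i \<in> {1..<n} then 1 else 0)"
  proof -
    have "(\<Sum>k\<in>{1..<n}. rot_mat n s t i k * cnj (rot_mat n s t j k))
        = (\<Sum>k\<in>{1..<n}. if k = i \<and> i = j then 1 else 0)"
      by (rule sum.cong) (auto simp: rot_mat_middle n)
    also have "\<dots> = (if i = j \<and> i \<in> {1..<n} then 1 else 0)"
      by (cases "i = j") (auto simp: sum.delta')
    finally show ?thesis .
  qed
  have unit: "complex_of_real s * complex_of_real s + complex_of_real t * complex_of_real t = 1"
    using st by (simp add: power2_eq_square flip: of_real_mult of_real_add)
  have "(\<Sum>k<n+1. rot_mat n s t i k * cnj (rot_mat n s t j k))
      = rot_mat n s t i 0 * cnj (rot_mat n s t j 0) + rot_mat n s t i n * cnj (rot_mat n s t j n)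
        + (if i = j \<and> i \<in> {1..<n} then 1 else 0)"
    unfolding split using n
    by (subst sum.insert, simp, simp, subst sum.insert, simp, simp, simp only: middle add.assoc)
  also have "\<dots> = (if i = j then 1 else 0)"
    using n i j unit by (auto simp: rot_mat_def algebra_simps)
  finally show ?thesis .
qed

lemma rot_mat_nonzero_permutation:
  assumes n: "n \<ge> 1" and perm: "p permutes {..<n+1}"
    and nonzero: "\<And>i. i < n+1 \<Longrightarrow> rot_mat n s t i (p i) \<noteq> 0"
  shows "p = id \<or> p = Transposition.transpose 0 n"
proof -
  have middle: "p i = i" if "0 < i" "i < n" for i
    using nonzero[of i] that by (auto simp: rot_mat_def split: if_splits)
  have outside: "p i = i" if "i \<ge> n+1" for i
    using permutes_not_in[OF perm] that by auto
  have p0: "p 0 = 0 \<or> p 0 = n" and pn: "p n = 0 \<or> p n = n"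
    using nonzero[of 0] nonzero[of n] n by (auto simp: rot_mat_def split: if_splits)
  have "p 0 = 0 \<and> p n = n \<or> p 0 = n \<and> p n = 0"
    using p0 pn permutes_inj[OF perm] n by (metis inj_eq not_one_le_zero)
  then show ?thesis
  proof
    assume "p 0 = 0 \<and> p n = n"
    then have "p x = x" for x
      using middle[of x] outside[of x] by (cases "x = 0"; cases "x = n"; cases "x < n"; auto)
    then show ?thesis by auto
  next
    assume "p 0 = n \<and> p n = 0"
    then have "p x = Transposition.transpose 0 n x" for x
      using middle[of x] outside[of x] n
      by (cases "x = 0"; cases "x = n"; cases "x < n"; auto simp: transpose_apply_other)
    then show ?thesis by auto
  qed
qed

lemma mat_det_rot_mat:
  assumes n: "n \<ge> 1" and st: "s\<^sup>2 + t\<^sup>2 = 1"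
  shows "mat_det (n+1) (rot_mat n s t) = 1"
proof -
  define T where "T = Transposition.transpose (0::nat) n"
  define P where "P = {p. p permutes {..<n+1}}"
  define f where "f p = of_int (sign p) * (\<Prod>i<n+1. rot_mat n s t i (p i))" for p
  have split: "{..<n+1} = insert 0 (insert n {1..<n})" using n by auto
  have sub: "{id, T} \<subseteq> P"
    unfolding P_def T_def using n by (auto intro: permutes_id permutes_swap_id)
  have vanish: "f p = 0" if "p \<in> P - {id, T}" for p
  proof (rule ccontr)
    assume "f p \<noteq> 0"
    then have "\<And>i. i < n+1 \<Longrightarrow> rot_mat n s t i (p i) \<noteq> 0"
      unfolding f_def by (metis finite_lessThan lessThan_iff mult_zero_right prod_zero_iff)
    with that show False
      using rot_mat_nonzero_permutation[OF n] unfolding P_def T_def by blast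
  qed
  have "T \<noteq> id"
    using n unfolding T_def by (metis id_apply not_one_le_zero transpose_apply_first)
  have "mat_det (n+1) (rot_mat n s t) = sum f P" unfolding mat_det_def f_def P_def by simp
  also have "\<dots> = sum f {id, T}"
    by (rule sum.mono_neutral_right) (use sub vanish in \<open>auto simp: P_def finite_permutations\<close>)
  also have "\<dots> = f id + f T" using \<open>T \<noteq> id\<close> by simp
  also have "f id = of_real t * of_real t"
  proof -
    have "(\<Prod>i\<in>{1..<n}. rot_mat n s t i i) = 1" by (rule prod.neutral) (auto simp: rot_mat_def)
    then show ?thesis unfolding f_def split using n by (simp add: rot_mat_def)
  qed
  also have "f T = of_real s * of_real s"
  proof -
    have "(\<Prod>i\<in>{1..<n}. rot_mat n s t i (T i)) = 1"
      by (rule prod.neutral) (auto simp: rot_mat_def T_def)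
    moreover have "sign T = -1" using n unfolding T_def by (simp add: sign_swap_id)
    ultimately show ?thesis unfolding f_def split using n by (simp add: rot_mat_def T_def)
  qed
  also have "of_real t * of_real t + of_real s * of_real s = (1::complex)"
    using st by (simp add: power2_eq_square flip: of_real_mult of_real_add)
  finally show ?thesis .
qed

lemma rot_mat_in_SU:
  assumes "n \<ge> 1" and "s\<^sup>2 + t\<^sup>2 = 1"
  shows "rot_mat n s t \<in> SU (n+1)"
  unfolding SU_def
proof (intro CollectI conjI allI impI)
  show "rot_mat n s t i j = 0" if "n+1 \<le> i \<or> n+1 \<le> j" for i j
    using that by (auto simp: rot_mat_def)
  show "(\<Sum>k<n+1. rot_mat n s t i k * cnj (rot_mat n s t j k)) = (if i = j then 1 else 0)"
    if "i < n+1" "j < n+1" for i j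
    using assms that by (rule rot_mat_orthonormal)
  show "mat_det (n+1) (rot_mat n s t) = 1" using assms by (rule mat_det_rot_mat)
qed

lemma SU_last_row_bound:
  assumes n: "n \<ge> 1" and A: "A \<in> SU (n+1)"
  shows "(cmod (A n 0))\<^sup>2 + (cmod (A n n))\<^sup>2 \<le> 1"
proof -
  have "(\<Sum>k<n+1. A n k * cnj (A n k)) = 1" using A unfolding SU_def by auto
  then have "(\<Sum>k<n+1. complex_of_real ((cmod (A n k))\<^sup>2)) = 1" by (simp only: complex_norm_square)
  then have row: "(\<Sum>k<n+1. (cmod (A n k))\<^sup>2) = 1" by (metis of_real_sum of_real_eq_1_iff)
  have "(\<Sum>k\<in>{0,n}. (cmod (A n k))\<^sup>2) \<le> (\<Sum>k<n+1. (cmod (A n k))\<^sup>2)"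
    by (rule sum_mono2) auto
  then show ?thesis using row n by simp
qed

lemma norm_bmon: "cmod (bmon n (a, b) A) = cmod (A n 0) ^ a * cmod (A n n) ^ b"
  by (simp add: bmon_def yfun_def zfun_def norm_mult norm_power)

lemma quarter_circle_le_one:
  assumes "(s, t) \<in> quarter_circle"
  shows "s \<le> 1" and "t \<le> 1"
proof -
  have "s\<^sup>2 + t\<^sup>2 = 1" using assms by (simp add: quarter_circle_def)
  then have "s\<^sup>2 \<le> 1" "t\<^sup>2 \<le> 1"
    using zero_le_power2[of s] zero_le_power2[of t] by linarith+
  then show "s \<le> 1" "t \<le> 1" by (auto simp: abs_square_le_1)
qed

lemma quarter_disc_dominated_by_circle:
  fixes u v :: real
  assumes u: "0 \<le> u" and v: "0 \<le> v" and uv: "u\<^sup>2 + v\<^sup>2 \<le> 1"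
  obtains s t where "(s, t) \<in> quarter_circle" and "u ^ a * v ^ b \<le> s ^ a * t ^ b"
proof (cases "u = 0 \<and> v = 0")
  case True
  then show ?thesis
    using that[of 1 0] by (cases a; cases b) (auto simp: quarter_circle_def)
next
  case False
  define r where "r = sqrt (u\<^sup>2 + v\<^sup>2)"
  have pos: "0 < u\<^sup>2 + v\<^sup>2" using False by (simp add: sum_power2_gt_zero_iff)
  then have r: "0 < r" "r \<le> 1" "r\<^sup>2 = u\<^sup>2 + v\<^sup>2" using uv by (auto simp: r_def)
  have "(u/r, v/r) \<in> quarter_circle"
    using r u v pos False by (simp add: quarter_circle_def power_divide flip: add_divide_distrib)
  moreover have "u ^ a * v ^ b \<le> (u/r) ^ a * (v/r) ^ b"
  proof -
    have "u ^ a * v ^ b \<le> u ^ a * v ^ b / r ^ (a + b)"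
      using r u v by (simp add: le_divide_eq mult_left_le power_le_one)
    also have "\<dots> = (u/r) ^ a * (v/r) ^ b" by (simp add: power_divide power_add)
    finally show ?thesis .
  qed
  ultimately show ?thesis by (rule that)
qed

lemma supnorm_bmon_ge:
  assumes "n \<ge> 1" and "(s, t) \<in> quarter_circle"
  shows "s ^ a * t ^ b \<le> supnorm (n+1) (bmon n (a, b))"
proof -
  have bounded: "bdd_above ((\<lambda>A. cmod (bmon n (a, b) A)) ` SU (n+1))"
  proof (rule bdd_aboveI2)
    fix A assume A: "A \<in> SU (n+1)"
    obtain s' t' where "(s', t') \<in> quarter_circle"
      and le: "cmod (A n 0) ^ a * cmod (A n n) ^ b \<le> s' ^ a * t' ^ b"
      using quarter_disc_dominated_by_circle[OF norm_ge_zero norm_ge_zero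
          SU_last_row_bound[OF \<open>n \<ge> 1\<close> A]] .
    then have "s' ^ a * t' ^ b \<le> 1"
      using quarter_circle_le_one[of s' t']
      by (auto simp: quarter_circle_def mult_le_one power_le_one)
    with le show "cmod (bmon n (a, b) A) \<le> 1" by (simp add: norm_bmon)
  qed
  have "s ^ a * t ^ b = cmod (bmon n (a, b) (rot_mat n s t))"
    using assms by (simp add: norm_bmon rot_mat_def quarter_circle_def)
  also have "\<dots> \<le> supnorm (n+1) (bmon n (a, b))"
    unfolding supnorm_def
    using assms by (intro cSUP_upper[OF _ bounded] rot_mat_in_SU) (auto simp: quarter_circle_def)
  finally show ?thesis .
qed

lemma supnorm_bmon_le:
  assumes n: "n \<ge> 1" and bound: "\<And>s t. (s, t) \<in> quarter_circle \<Longrightarrow> s ^ a * t ^ b \<le> C"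
  shows "supnorm (n+1) (bmon n (a, b)) \<le> C"
  unfolding supnorm_def
proof (rule cSUP_least)
  show "SU (n+1) \<noteq> {}" using rot_mat_in_SU[OF n, of 1 0] by auto
next
  fix A assume A: "A \<in> SU (n+1)"
  obtain s t where "(s, t) \<in> quarter_circle"
    and "cmod (A n 0) ^ a * cmod (A n n) ^ b \<le> s ^ a * t ^ b"
    using quarter_disc_dominated_by_circle[OF norm_ge_zero norm_ge_zero
        SU_last_row_bound[OF n A]] .
  with bound show "cmod (bmon n (a, b) A) \<le> C" by (fastforce simp: norm_bmon)
qed

lemma supnorm_bmon_ratio_le:
  assumes n: "n \<ge> 1" and K: "0 \<le> K"
    and dominated: "\<And>s t. (s, t) \<in> quarter_circle \<Longrightarrow>
        \<exists>(s', t') \<in> quarter_circle. s ^ a * t ^ b \<le> K * (s' ^ a' * t' ^ b')"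
  shows "supnorm (n+1) (bmon n (a, b)) / supnorm (n+1) (bmon n (a', b')) \<le> K"
proof -
  define D where "D = supnorm (n+1) (bmon n (a', b'))"
  have "(1::real) ^ a' * 0 ^ b' \<le> D"
    unfolding D_def by (rule supnorm_bmon_ge[OF n]) (simp add: quarter_circle_def)
  then have "0 \<le> D" by (cases b') auto
  have "supnorm (n+1) (bmon n (a, b)) \<le> K * D"
  proof (rule supnorm_bmon_le[OF n])
    fix s t assume "(s, t) \<in> quarter_circle"
    then obtain s' t' where "(s', t') \<in> quarter_circle"
      and le: "s ^ a * t ^ b \<le> K * (s' ^ a' * t' ^ b')"
      using dominated by blast
    then show "s ^ a * t ^ b \<le> K * D"
      using supnorm_bmon_ge[OF n] K unfolding D_def by (meson mult_left_mono order_trans)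
  qed
  then show ?thesis
    using \<open>0 \<le> D\<close> K by (cases "D = 0") (simp_all add: D_def pos_divide_le_eq)
qed

lemma quarter_circle_swap: "(s, t) \<in> quarter_circle \<Longrightarrow> (t, s) \<in> quarter_circle"
  by (auto simp: quarter_circle_def)

lemma power_mult_power_le_swap:
  fixes u v :: real
  assumes "0 \<le> u" "u \<le> v" "b \<le> a"
  shows "u ^ a * v ^ b \<le> v ^ a * u ^ b"
proof -
  have "u ^ a * v ^ b = u ^ (a - b) * (u * v) ^ b"
    using assms by (simp add: power_mult_distrib flip: power_add)
  also have "\<dots> \<le> v ^ (a - b) * (u * v) ^ b"
    using assms by (intro mult_right_mono power_mono) auto
  also have "\<dots> = v ^ a * u ^ b"
    using assms by (simp add: power_mult_distrib mult.commute flip: power_add)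
  finally show ?thesis .
qed

lemma quarter_circle_diagonal_bound:
  assumes "(s, t) \<in> quarter_circle"
  shows "\<exists>(s', t') \<in> quarter_circle. s ^ g * t ^ g \<le> 2 * (s' ^ (g+1) * t' ^ (g+1))"
proof -
  let ?c = "sqrt (1/2) :: real"
  have "(?c, ?c) \<in> quarter_circle" by (simp add: quarter_circle_def)
  moreover have "s ^ g * t ^ g \<le> 2 * (?c ^ (g+1) * ?c ^ (g+1))"
  proof -
    have "0 \<le> (s - t)\<^sup>2" by simp
    then have "s * t \<le> 1/2"
      using assms by (simp add: quarter_circle_def power2_diff)
    have "s ^ g * t ^ g = (s * t) ^ g" by (simp add: power_mult_distrib)
    also have "\<dots> \<le> (1/2) ^ g"
      using assms \<open>s * t \<le> 1/2\<close> by (intro power_mono) (auto simp: quarter_circle_def)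
    also have "\<dots> = 2 * (?c * ?c) ^ (g+1)"
      by (simp only: real_sqrt_mult_self) simp
    also have "\<dots> = 2 * (?c ^ (g+1) * ?c ^ (g+1))" by (simp only: power_mult_distrib)
    finally show ?thesis .
  qed
  ultimately show ?thesis by blast
qed

lemma quarter_circle_larger_exponent_bound:
  assumes st: "(s, t) \<in> quarter_circle" and "b \<le> a"
  shows "\<exists>(s', t') \<in> quarter_circle. s ^ a * t ^ b \<le> 2 * (s' ^ (a+1) * t' ^ b)"
proof -
  define p q where "p = max s t" and "q = min s t"
  have pq: "(p, q) \<in> quarter_circle" and "q \<le> p"
    using st by (auto simp: p_def q_def max_def min_def quarter_circle_def)
  then have "q\<^sup>2 \<le> p\<^sup>2" by (intro power_mono) (auto simp: quarter_circle_def)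
  moreover have "p\<^sup>2 + q\<^sup>2 = 1" using pq by (simp add: quarter_circle_def)
  ultimately have "1 \<le> 2 * p\<^sup>2" by linarith
  moreover have "p\<^sup>2 \<le> p"
    using quarter_circle_le_one(1)[OF pq] pq
    by (simp add: power2_eq_square mult_left_le quarter_circle_def)
  ultimately have "1 \<le> 2 * p" by linarith
  have "s ^ a * t ^ b \<le> p ^ a * q ^ b"
    using power_mult_power_le_swap[of s t b a] power_mult_power_le_swap[of t s b a] st \<open>b \<le> a\<close>
    by (auto simp: p_def q_def max_def min_def quarter_circle_def)
  also have "\<dots> \<le> 2 * p * (p ^ a * q ^ b)"
    using mult_right_mono[OF \<open>1 \<le> 2 * p\<close>, of "p ^ a * q ^ b"] pq
    by (simp add: quarter_circle_def)
  also have "\<dots> = 2 * (p ^ (a+1) * q ^ b)" by (simp add: algebra_simps)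
  finally show ?thesis using pq by blast
qed

lemma quarter_circle_larger_second_exponent_bound:
  assumes "(s, t) \<in> quarter_circle" and "a \<le> b"
  shows "\<exists>(s', t') \<in> quarter_circle. s ^ a * t ^ b \<le> 2 * (s' ^ a * t' ^ (b+1))"
proof -
  obtain s' t' where st': "(s', t') \<in> quarter_circle"
    and le: "t ^ b * s ^ a \<le> 2 * (s' ^ (b+1) * t' ^ a)"
    using quarter_circle_larger_exponent_bound[OF quarter_circle_swap[OF assms(1)] assms(2)]
    by blast
  have "s ^ a * t ^ b \<le> 2 * (t' ^ a * s' ^ (b+1))" using le by (simp add: mult_ac)
  with quarter_circle_swap[OF st'] show ?thesis by blast
qed

theorem lemma3p3:
  fixes n :: nat
  assumes "n \<ge> 1"
  shows "bdd_above {supnorm (n+1) (bmon n (g1, g2)) / supnorm (n+1) (bmon n (g1 + 1, g2 + 1)) | g1 g2. g1 = g2}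
       \<and> bdd_above {supnorm (n+1) (bmon n (g1, g2)) / supnorm (n+1) (bmon n (g1 + 1, g2)) | g1 g2. g1 \<ge> g2}
       \<and> bdd_above {supnorm (n+1) (bmon n (g1, g2)) / supnorm (n+1) (bmon n (g1, g2 + 1)) | g1 g2. g1 \<le> g2}"
proof -
  have diagonal: "supnorm (n+1) (bmon n (g, g)) / supnorm (n+1) (bmon n (g + 1, g + 1)) \<le> 2" for g
    using supnorm_bmon_ratio_le[OF assms _ quarter_circle_diagonal_bound] by simp
  have first: "supnorm (n+1) (bmon n (g1, g2)) / supnorm (n+1) (bmon n (g1 + 1, g2)) \<le> 2"
    if "g2 \<le> g1" for g1 g2
    using supnorm_bmon_ratio_le[OF assms _ quarter_circle_larger_exponent_bound[OF _ that]] by simp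
  have second: "supnorm (n+1) (bmon n (g1, g2)) / supnorm (n+1) (bmon n (g1, g2 + 1)) \<le> 2"
    if "g1 \<le> g2" for g1 g2
    using supnorm_bmon_ratio_le[OF assms _ quarter_circle_larger_second_exponent_bound[OF _ that]]
    by simp
  show ?thesis
    by (intro conjI bdd_aboveI[where M = 2]) (use diagonal first second in blast)+
qed

end
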